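(* Let $G$ be a torsion-free group, $\mathbb{F}$ a field, $\mathsf{a}$ a unit in $\mathbb{F}[G]$ with $|supp(\mathsf{a})|=4$ and $|S_{\mathsf{a}}|=10$, and $\mathsf{b}$ a mate of $\mathsf{a}$. Then one of the following holds: (i) there exist distinct non-trivial $x,y\in G$ and $\mathsf{a}',\mathsf{b}'\in\mathbb{F}[G]$ with $supp(\mathsf{a}')=\{1,x,x^{-1},y\}$, $\mathsf{a}'\mathsf{b}'=1$ and $U(\mathsf{a},\mathsf{b})\cong U(\mathsf{a}',\mathsf{b}')$; (ii) there exist distinct non-trivial $x,y\in G$ and $\mathsf{a}',\mathsf{b}'\in\mathbb{F}[G]$ with $supp(\mathsf{a}')=\{1,x,y,xy\}$, $\mathsf{a}'\mathsf{b}'=1$ and $U(\mathsf{a},\mathsf{b})\cong U(\mathsf{a}',\mathsf{b}')$.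
   Context: $supp(\gamma)=\{x\in G:\gamma_x\ne0\}$; $S_{\mathsf{a}}=\{h^{-1}h':h\ne h',\ h,h'\in supp(\mathsf{a})\}$. A mate of $\mathsf{a}$ is an element $\mathsf{b}$ with $\mathsf{a}\mathsf{b}=1$ of minimal support size among all $\mathsf{b}'$ with $\mathsf{a}\mathsf{b}'=1$. For $\mathsf{c}\mathsf{d}=1$, $U(\mathsf{c},\mathsf{d})$ is the multigraph with vertex set $supp(\mathsf{d})$ whose edges are the sets $\{(h,h',g,g'),(h',h,g',g)\}$ with $h,h'\in supp(\mathsf{c})$, $g,g'\in supp(\mathsf{d})$, $g\ne g'$, $hg=h'g'$, each joining $g$ and $g'$. Isomorphism $\cong$ means a pair of bijections on vertices and on edges preserving adjacency and non-adjacency of vertices and of edges. *)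

theory Defs
  imports "HOL-Algebra.Group"
begin

definition supp :: "('g \<Rightarrow> 'k::zero) \<Rightarrow> 'g set" where
  "supp f = {x. f x \<noteq> 0}"

definition grp_ring :: "('g, 'm) monoid_scheme \<Rightarrow> ('g \<Rightarrow> 'k::field) set" where
  "grp_ring G = {f. finite (supp f) \<and> supp f \<subseteq> carrier G}"

definition gr_mult :: "('g, 'm) monoid_scheme \<Rightarrow> ('g \<Rightarrow> 'k::field) \<Rightarrow> ('g \<Rightarrow> 'k) \<Rightarrow> ('g \<Rightarrow> 'k)" where
  "gr_mult G a b = (\<lambda>g. \<Sum>p\<in>{(h, k). h \<in> supp a \<and> k \<in> supp b \<and> h \<otimes>\<^bsub>G\<^esub> k = g}. a (fst p) * b (snd p))"

definition gr_one :: "('g, 'm) monoid_scheme \<Rightarrow> ('g \<Rightarrow> 'k::field)" where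
  "gr_one G = (\<lambda>g. if g = \<one>\<^bsub>G\<^esub> then 1 else 0)"

definition gr_unit :: "('g, 'm) monoid_scheme \<Rightarrow> ('g \<Rightarrow> 'k::field) \<Rightarrow> bool" where
  "gr_unit G a \<longleftrightarrow> a \<in> grp_ring G \<and>
     (\<exists>b\<in>grp_ring G. gr_mult G a b = gr_one G \<and> gr_mult G b a = gr_one G)"

definition is_mate :: "('g, 'm) monoid_scheme \<Rightarrow> ('g \<Rightarrow> 'k::field) \<Rightarrow> ('g \<Rightarrow> 'k) \<Rightarrow> bool" where
  "is_mate G a b \<longleftrightarrow> b \<in> grp_ring G \<and> gr_mult G a b = gr_one G \<and>
     (\<forall>b'\<in>grp_ring G. gr_mult G a b' = gr_one G \<longrightarrow> card (supp b) \<le> card (supp b'))"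

definition S_set :: "('g, 'm) monoid_scheme \<Rightarrow> ('g \<Rightarrow> 'k::zero) \<Rightarrow> 'g set" where
  "S_set G a = {inv\<^bsub>G\<^esub> h \<otimes>\<^bsub>G\<^esub> h' | h h'. h \<noteq> h' \<and> h \<in> supp a \<and> h' \<in> supp a}"

definition torsion_free :: "('g, 'm) monoid_scheme \<Rightarrow> bool" where
  "torsion_free G \<longleftrightarrow> (\<forall>x\<in>carrier G. x \<noteq> \<one>\<^bsub>G\<^esub> \<longrightarrow> (\<forall>n::nat. n > 0 \<longrightarrow> x [^]\<^bsub>G\<^esub> n \<noteq> \<one>\<^bsub>G\<^esub>))"

definition U_vertices :: "('g \<Rightarrow> 'k::zero) \<Rightarrow> 'g set" where
  "U_vertices d = supp d"

definition U_edges :: "('g, 'm) monoid_scheme \<Rightarrow> ('g \<Rightarrow> 'k::zero) \<Rightarrow> ('g \<Rightarrow> 'k) \<Rightarrow> ('g \<times> 'g \<times> 'g \<times> 'g) set set" where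
  "U_edges G c d = {{(h, h', g, g'), (h', h, g', g)} | h h' g g'.
      h \<in> supp c \<and> h' \<in> supp c \<and> g \<in> supp d \<and> g' \<in> supp d \<and> g \<noteq> g' \<and>
      h \<otimes>\<^bsub>G\<^esub> g = h' \<otimes>\<^bsub>G\<^esub> g'}"

definition edge_ends :: "('g \<times> 'g \<times> 'g \<times> 'g) set \<Rightarrow> 'g set" where
  "edge_ends e = (\<lambda>t. fst (snd (snd t))) ` e"

definition U_adj_vertices :: "('g, 'm) monoid_scheme \<Rightarrow> ('g \<Rightarrow> 'k::zero) \<Rightarrow> ('g \<Rightarrow> 'k) \<Rightarrow> 'g \<Rightarrow> 'g \<Rightarrow> bool" where
  "U_adj_vertices G c d v w \<longleftrightarrow> (\<exists>e\<in>U_edges G c d. edge_ends e = {v, w})"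

definition adj_edges :: "('g \<times> 'g \<times> 'g \<times> 'g) set \<Rightarrow> ('g \<times> 'g \<times> 'g \<times> 'g) set \<Rightarrow> bool" where
  "adj_edges e f \<longleftrightarrow> edge_ends e \<inter> edge_ends f \<noteq> {}"

definition U_iso :: "('g, 'm) monoid_scheme \<Rightarrow> ('g \<Rightarrow> 'k::zero) \<Rightarrow> ('g \<Rightarrow> 'k) \<Rightarrow> ('g \<Rightarrow> 'k) \<Rightarrow> ('g \<Rightarrow> 'k) \<Rightarrow> bool" where
  "U_iso G c d c' d' \<longleftrightarrow>
     (\<exists>\<phi> \<psi>. bij_betw \<phi> (U_vertices d) (U_vertices d') \<and>
            bij_betw \<psi> (U_edges G c d) (U_edges G c' d') \<and>
            (\<forall>v\<in>U_vertices d. \<forall>w\<in>U_vertices d.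
                U_adj_vertices G c d v w \<longleftrightarrow> U_adj_vertices G c' d' (\<phi> v) (\<phi> w)) \<and>
            (\<forall>e\<in>U_edges G c d. \<forall>f\<in>U_edges G c d.
                adj_edges e f \<longleftrightarrow> adj_edges (\<psi> e) (\<psi> f)))"

end

theory Submission
  imports Defs
begin

(* Replacing a and b by k^-1 a and b k keeps a b = 1, since the product is only conjugated,
   and the right translation by k carries U(a,b) isomorphically onto U(k^-1 a, b k).
   Four support elements give twelve ordered pairs (h,h') with h ~= h', but S_a has only ten
   elements, so h^-1 h' = k^-1 k' for two different pairs.  If the pairs share an element,
   say h' = k, translating by k turns the support into {1, x, x^-1, y} with x = k^-1 k';
   both h' = k and h = k' at once would make h^-1 k an element of order 2, impossible in a
   torsion-free group.  If h, h', k, k' are distinct, translating by h turns the support into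
   {1, x, y, x y} with x = h^-1 k and y = h^-1 h'. *)

lemma edge_ends_subset_supp: "e \<in> U_edges G c d \<Longrightarrow> edge_ends e \<subseteq> supp d"
  by (auto simp: U_edges_def edge_ends_def)

lemma U_iso_transport:
  assumes inj_f: "inj_on f (supp d)" and vertices: "supp d' = f ` supp d"
    and inj_T: "inj_on T (\<Union>(U_edges G c d))"
    and edges: "U_edges G c' d' = image T ` U_edges G c d"
    and ends: "\<And>e. e \<in> U_edges G c d \<Longrightarrow> edge_ends (T ` e) = f ` edge_ends e"
  shows "U_iso G c d c' d'"
  unfolding U_iso_def
proof (intro exI conjI ballI)
  show "bij_betw f (U_vertices d) (U_vertices d')"
    unfolding U_vertices_def vertices using inj_f by (rule bij_betw_imageI) simp
  have "inj_on (image T) (U_edges G c d)"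
    by (rule inj_onI) (use inj_on_image_eq_iff[OF inj_T] in blast)
  then show "bij_betw (image T) (U_edges G c d) (U_edges G c' d')"
    unfolding edges by (rule bij_betw_imageI) simp
next
  fix v w assume "v \<in> U_vertices d" "w \<in> U_vertices d"
  then have vw: "{v, w} \<subseteq> supp d" by (simp add: U_vertices_def)
  have "edge_ends (T ` e) = {f v, f w} \<longleftrightarrow> edge_ends e = {v, w}" if "e \<in> U_edges G c d" for e
    using inj_on_image_eq_iff[OF inj_f edge_ends_subset_supp[OF that] vw] ends[OF that] by simp
  then show "U_adj_vertices G c d v w \<longleftrightarrow> U_adj_vertices G c' d' (f v) (f w)"
    unfolding U_adj_vertices_def edges by blast
next
  fix e1 e2 assume e: "e1 \<in> U_edges G c d" "e2 \<in> U_edges G c d"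
  have "edge_ends (T ` e1) \<inter> edge_ends (T ` e2) = f ` (edge_ends e1 \<inter> edge_ends e2)"
    using inj_on_image_Int[OF inj_f edge_ends_subset_supp[OF e(1)] edge_ends_subset_supp[OF e(2)]]
    by (simp add: ends e)
  then show "adj_edges e1 e2 \<longleftrightarrow> adj_edges (T ` e1) (T ` e2)"
    by (simp add: adj_edges_def)
qed

(* In F[G] notation shift_left G k a = k^-1 a and shift_right G k b = b k, so that
   (shift_left G k a) (shift_right G k b) = k^-1 (a b) k. *)
definition shift_left :: "('g, 'm) monoid_scheme \<Rightarrow> 'g \<Rightarrow> ('g \<Rightarrow> 'k::zero) \<Rightarrow> 'g \<Rightarrow> 'k" where
  "shift_left G k a = (\<lambda>g. if g \<in> carrier G then a (k \<otimes>\<^bsub>G\<^esub> g) else 0)"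

definition shift_right :: "('g, 'm) monoid_scheme \<Rightarrow> 'g \<Rightarrow> ('g \<Rightarrow> 'k::zero) \<Rightarrow> 'g \<Rightarrow> 'k" where
  "shift_right G k b = (\<lambda>g. if g \<in> carrier G then b (g \<otimes>\<^bsub>G\<^esub> inv\<^bsub>G\<^esub> k) else 0)"

context group begin

lemma inv_mult_cancel_left [simp]: "x \<in> carrier G \<Longrightarrow> y \<in> carrier G \<Longrightarrow> inv x \<otimes> (x \<otimes> y) = y"
  and mult_inv_cancel_left [simp]: "x \<in> carrier G \<Longrightarrow> y \<in> carrier G \<Longrightarrow> x \<otimes> (inv x \<otimes> y) = y"
  by (simp_all add: m_assoc[symmetric])

lemma mult_inv_cancel_right [simp]: "x \<in> carrier G \<Longrightarrow> y \<in> carrier G \<Longrightarrow> y \<otimes> inv x \<otimes> x = y"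
  by (simp add: m_assoc)

lemma shift_left_apply [simp]: "x \<in> carrier G \<Longrightarrow> shift_left G k a x = a (k \<otimes> x)"
  by (simp add: shift_left_def)

lemma shift_right_apply [simp]: "x \<in> carrier G \<Longrightarrow> shift_right G k b x = b (x \<otimes> inv k)"
  by (simp add: shift_right_def)

lemma mem_supp_shift_left: "x \<in> supp (shift_left G k a) \<longleftrightarrow> x \<in> carrier G \<and> k \<otimes> x \<in> supp a"
  by (simp add: supp_def shift_left_def)

lemma mem_supp_shift_right: "x \<in> supp (shift_right G k b) \<longleftrightarrow> x \<in> carrier G \<and> x \<otimes> inv k \<in> supp b"
  by (simp add: supp_def shift_right_def)

lemma supp_shift_left:
  assumes "k \<in> carrier G" and "supp a \<subseteq> carrier G"
  shows "supp (shift_left G k a) = (\<lambda>h. inv k \<otimes> h) ` supp a"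
  using assms by (force simp: mem_supp_shift_left inv_solve_left m_assoc[symmetric])

lemma supp_shift_right:
  assumes "k \<in> carrier G" and "supp b \<subseteq> carrier G"
  shows "supp (shift_right G k b) = (\<lambda>h. h \<otimes> k) ` supp b"
  using assms by (force simp: mem_supp_shift_right inv_solve_right m_assoc)

lemma shift_in_grp_ring:
  assumes "k \<in> carrier G" and "a \<in> grp_ring G"
  shows "shift_left G k a \<in> grp_ring G" and "shift_right G k a \<in> grp_ring G"
  using assms by (auto simp: grp_ring_def supp_shift_left supp_shift_right)

lemma conj_mult:
  assumes "k \<in> carrier G" "p \<in> carrier G" "q \<in> carrier G"
  shows "inv k \<otimes> p \<otimes> (q \<otimes> k) = inv k \<otimes> (p \<otimes> q) \<otimes> k"
  using assms by (simp add: m_assoc)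

lemma conj_mult_eq_iff:
  assumes "k \<in> carrier G" "p \<in> carrier G" "q \<in> carrier G" "g \<in> carrier G"
  shows "inv k \<otimes> p \<otimes> (q \<otimes> k) = g \<longleftrightarrow> p \<otimes> q = k \<otimes> g \<otimes> inv k"
proof -
  have "inv k \<otimes> (p \<otimes> q) \<otimes> k = g \<longleftrightarrow> p \<otimes> q \<otimes> k = k \<otimes> g"
    using assms by (simp add: m_assoc inv_solve_left')
  then show ?thesis
    using assms by (auto simp: conj_mult inv_solve_right)
qed

lemma gr_mult_shift:
  assumes k: "k \<in> carrier G" and a: "a \<in> grp_ring G" and b: "b \<in> grp_ring G" and g: "g \<in> carrier G"
  shows "gr_mult G (shift_left G k a) (shift_right G k b) g = gr_mult G a b (k \<otimes> g \<otimes> inv k)"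
proof -
  have carrier: "supp a \<subseteq> carrier G" "supp b \<subseteq> carrier G"
    using a b by (simp_all add: grp_ring_def)
  show ?thesis
    unfolding gr_mult_def
    by (rule sum.reindex_bij_witness[where j = "\<lambda>(h, m). (k \<otimes> h, m \<otimes> inv k)"
          and i = "\<lambda>(p, q). (inv k \<otimes> p, q \<otimes> k)"])
      (use k g carrier in \<open>auto simp: mem_supp_shift_left mem_supp_shift_right conj_mult_eq_iff
        m_assoc[of k] m_assoc[of _ _ "inv k"] subset_iff\<close>)
qed

lemma gr_mult_outside_carrier:
  assumes "a \<in> grp_ring G" and "b \<in> grp_ring G" and "g \<notin> carrier G"
  shows "gr_mult G a b g = 0"
proof -
  have no_pairs: "{(h, k). h \<in> supp a \<and> k \<in> supp b \<and> h \<otimes> k = g} = {}"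
    using assms by (auto simp: grp_ring_def)
  show ?thesis
    unfolding gr_mult_def no_pairs by simp
qed

lemma gr_mult_shift_eq_one:
  assumes k: "k \<in> carrier G" and a: "a \<in> grp_ring G" and b: "b \<in> grp_ring G"
    and ab: "gr_mult G a b = gr_one G"
  shows "gr_mult G (shift_left G k a) (shift_right G k b) = gr_one G"
proof
  fix g
  show "gr_mult G (shift_left G k a) (shift_right G k b) g = gr_one G g"
  proof (cases "g \<in> carrier G")
    case True
    have "k \<otimes> g \<otimes> inv k = \<one> \<longleftrightarrow> g = \<one>"
      using k True by (simp add: inv_solve_right')
    then show ?thesis
      using True by (simp add: gr_mult_shift[OF k a b] ab gr_one_def)
  next
    case False
    then have "g \<noteq> \<one>" by auto
    with False show ?thesis
      using gr_mult_outside_carrier[OF shift_in_grp_ring(1)[OF k a] shift_in_grp_ring(2)[OF k b] False]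
      by (simp add: gr_one_def)
  qed
qed

lemma U_edges_shift:
  assumes k: "k \<in> carrier G" and a: "supp a \<subseteq> carrier G" and b: "supp b \<subseteq> carrier G"
  shows "U_edges G (shift_left G k a) (shift_right G k b)
    = image (\<lambda>(h, h', g, g'). (inv k \<otimes> h, inv k \<otimes> h', g \<otimes> k, g' \<otimes> k)) ` U_edges G a b"
    (is "_ = image ?T ` _")
proof (intro equalityI subsetI)
  fix e' assume "e' \<in> U_edges G (shift_left G k a) (shift_right G k b)"
  then obtain h h' g g' where e': "e' = {(h, h', g, g'), (h', h, g', g)}" "g \<noteq> g'"
    "h \<in> carrier G" "h' \<in> carrier G" "g \<in> carrier G" "g' \<in> carrier G"
    "k \<otimes> h \<in> supp a" "k \<otimes> h' \<in> supp a" "g \<otimes> inv k \<in> supp b" "g' \<otimes> inv k \<in> supp b"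
    "h \<otimes> g = h' \<otimes> g'"
    unfolding U_edges_def mem_supp_shift_left mem_supp_shift_right by blast
  define e where "e = {(k \<otimes> h, k \<otimes> h', g \<otimes> inv k, g' \<otimes> inv k), (k \<otimes> h', k \<otimes> h, g' \<otimes> inv k, g \<otimes> inv k)}"
  have "k \<otimes> h \<otimes> (g \<otimes> inv k) = k \<otimes> h' \<otimes> (g' \<otimes> inv k)"
    using k e' by (simp add: m_assoc flip: m_assoc[of h])
  moreover have "g \<otimes> inv k \<noteq> g' \<otimes> inv k"
    using k e' by simp
  ultimately have "e \<in> U_edges G a b"
    using e' unfolding U_edges_def e_def by blast
  moreover have "e' = ?T ` e"
    using e' k by (simp add: e_def m_assoc[symmetric])
  ultimately show "e' \<in> image ?T ` U_edges G a b" by blast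
next
  fix e' assume "e' \<in> image ?T ` U_edges G a b"
  then obtain p p' q q' where e': "e' = ?T ` {(p, p', q, q'), (p', p, q', q)}"
    "p \<in> supp a" "p' \<in> supp a" "q \<in> supp b" "q' \<in> supp b" "q \<noteq> q'" "p \<otimes> q = p' \<otimes> q'"
    unfolding U_edges_def by blast
  have c: "p \<in> carrier G" "p' \<in> carrier G" "q \<in> carrier G" "q' \<in> carrier G"
    using e' a b by auto
  then have "inv k \<otimes> p \<otimes> (q \<otimes> k) = inv k \<otimes> p' \<otimes> (q' \<otimes> k)"
    using k e'(7) by (simp add: conj_mult)
  moreover have "q \<otimes> k \<noteq> q' \<otimes> k"
    using k c e'(6) by simp
  moreover have "inv k \<otimes> p \<in> supp (shift_left G k a)" "inv k \<otimes> p' \<in> supp (shift_left G k a)"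
    "q \<otimes> k \<in> supp (shift_right G k b)" "q' \<otimes> k \<in> supp (shift_right G k b)"
    using k a b e' by (simp_all add: supp_shift_left supp_shift_right)
  ultimately show "e' \<in> U_edges G (shift_left G k a) (shift_right G k b)"
    using e'(1) unfolding U_edges_def by auto
qed

lemma U_iso_shift:
  assumes k: "k \<in> carrier G" and a: "supp a \<subseteq> carrier G" and b: "supp b \<subseteq> carrier G"
  shows "U_iso G a b (shift_left G k a) (shift_right G k b)"
proof (rule U_iso_transport[OF _ supp_shift_right[OF k b] _ U_edges_shift[OF k a b]])
  show "inj_on (\<lambda>h. h \<otimes> k) (supp b)"
    using k b by (intro inj_onI) (meson right_cancel subsetD)
  have "inj_on (\<lambda>(h, h', g, g'). (inv k \<otimes> h, inv k \<otimes> h', g \<otimes> k, g' \<otimes> k))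
      (carrier G \<times> carrier G \<times> carrier G \<times> carrier G)"
    using k by (intro inj_onI) auto
  moreover have "\<Union>(U_edges G a b) \<subseteq> carrier G \<times> carrier G \<times> carrier G \<times> carrier G"
    using a b by (auto simp: U_edges_def)
  ultimately show "inj_on (\<lambda>(h, h', g, g'). (inv k \<otimes> h, inv k \<otimes> h', g \<otimes> k, g' \<otimes> k)) (\<Union>(U_edges G a b))"
    by (rule inj_on_subset)
  show "edge_ends ((\<lambda>(h, h', g, g'). (inv k \<otimes> h, inv k \<otimes> h', g \<otimes> k, g' \<otimes> k)) ` e)
      = (\<lambda>h. h \<otimes> k) ` edge_ends e" for e
    unfolding edge_ends_def image_image by (rule image_cong) auto
qed

end

definition U_iso_realizable :: "('g, 'm) monoid_scheme \<Rightarrow> ('g \<Rightarrow> 'k::field) \<Rightarrow> ('g \<Rightarrow> 'k) \<Rightarrow> 'g set \<Rightarrow> bool" where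
  "U_iso_realizable G a b A \<longleftrightarrow> (\<exists>a' b'. a' \<in> grp_ring G \<and> b' \<in> grp_ring G \<and>
     supp a' = A \<and> gr_mult G a' b' = gr_one G \<and> U_iso G a b a' b')"

lemma (in group) U_iso_realizable_translate:
  assumes "k \<in> carrier G" and "a \<in> grp_ring G" and "b \<in> grp_ring G" and "gr_mult G a b = gr_one G"
  shows "U_iso_realizable G a b ((\<lambda>h. inv k \<otimes> h) ` supp a)"
proof -
  have "supp a \<subseteq> carrier G" "supp b \<subseteq> carrier G"
    using assms by (simp_all add: grp_ring_def)
  then show ?thesis
    unfolding U_iso_realizable_def
    using assms
    by (intro exI[of _ "shift_left G k a"] exI[of _ "shift_right G k b"] conjI
        shift_in_grp_ring gr_mult_shift_eq_one U_iso_shift supp_shift_left)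
qed

lemma card_eq_4_obtain_fourth:
  assumes "card A = 4" "p \<in> A" "q \<in> A" "r \<in> A" "p \<noteq> q" "q \<noteq> r" "p \<noteq> r"
  obtains d where "d \<notin> {p, q, r}" "A = {p, q, r, d}"
proof -
  have "finite A" using assms(1) by (metis card.infinite zero_neq_numeral)
  moreover have "{p, q, r} \<subseteq> A" "card {p, q, r} = 3" using assms by auto
  ultimately have "card (A - {p, q, r}) = 1" using assms(1) by (simp add: card_Diff_subset)
  then obtain d where "A - {p, q, r} = {d}" by (rule card_1_singletonE)
  then show ?thesis using that \<open>{p, q, r} \<subseteq> A\<close> by blast
qed

lemma card_off_diagonal:
  assumes "finite A"
  shows "card {(h, h'). h \<in> A \<and> h' \<in> A \<and> h \<noteq> h'} = card A * (card A - 1)"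
proof -
  have "{(h, h'). h \<in> A \<and> h' \<in> A \<and> h \<noteq> h'} = A \<times> A - (\<lambda>h. (h, h)) ` A" by blast
  moreover have "card ((\<lambda>h. (h, h)) ` A) = card A" by (rule card_image) (auto intro: inj_onI)
  ultimately show ?thesis
    using assms by (simp add: card_Diff_subset card_cartesian_product diff_mult_distrib2 image_subset_iff)
qed

context group begin

lemma S_set_collision:
  assumes fin: "finite (supp a)" and carrier: "supp a \<subseteq> carrier G"
    and few: "card (S_set G a) < card (supp a) * (card (supp a) - 1)"
  obtains h h' k k' where "h \<in> supp a" "h' \<in> supp a" "k \<in> supp a" "k' \<in> supp a"
    "h \<noteq> h'" "k \<noteq> k'" "h \<noteq> k" "inv h \<otimes> h' = inv k \<otimes> k'"
proof -
  define D where "D = {(h, h'). h \<in> supp a \<and> h' \<in> supp a \<and> h \<noteq> h'}"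
  have "S_set G a = (\<lambda>(h, h'). inv h \<otimes> h') ` D"
    unfolding S_set_def D_def by auto
  with few have "\<not> inj_on (\<lambda>(h, h'). inv h \<otimes> h') D"
    using card_off_diagonal[OF fin] card_image unfolding D_def by fastforce
  then obtain h h' k k' where pairs: "(h, h') \<in> D" "(k, k') \<in> D" "(h, h') \<noteq> (k, k')"
    and eq: "inv h \<otimes> h' = inv k \<otimes> k'"
    unfolding inj_on_def by auto
  moreover have "h \<noteq> k"
  proof
    assume "h = k"
    moreover have "h \<in> carrier G" "h' \<in> carrier G" "k' \<in> carrier G"
      using pairs carrier by (auto simp: D_def)
    ultimately show False
      using pairs eq by simp
  qed
  ultimately show ?thesis
    using that unfolding D_def by blast
qed

lemma torsion_free_inv_mult_eq_swap:
  assumes tf: "torsion_free G" and "h \<in> carrier G" "k \<in> carrier G" and eq: "inv h \<otimes> k = inv k \<otimes> h"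
  shows "h = k"
proof -
  define t where "t = inv h \<otimes> k"
  have t: "t \<in> carrier G" using assms by (simp add: t_def)
  have "t [^] (2::nat) = inv h \<otimes> k \<otimes> (inv k \<otimes> h)"
    using t eq by (simp add: t_def numeral_2_eq_2)
  also have "\<dots> = \<one>"
    using assms(2,3) by (simp add: m_assoc)
  finally have "t = \<one>"
    using tf t unfolding torsion_free_def by fastforce
  then show ?thesis
    using assms by (simp add: t_def inv_solve_left')
qed

lemma U_iso_realizable_inverse_pair:
  assumes a: "a \<in> grp_ring G" and b: "b \<in> grp_ring G" and ab: "gr_mult G a b = gr_one G"
    and card: "card (supp a) = 4" and pqr: "p \<in> supp a" "q \<in> supp a" "r \<in> supp a"
    and ne: "p \<noteq> q" "q \<noteq> r" "p \<noteq> r" and eq: "inv p \<otimes> q = inv q \<otimes> r"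
  shows "\<exists>x\<in>carrier G. \<exists>y\<in>carrier G. x \<noteq> y \<and> x \<noteq> \<one> \<and> y \<noteq> \<one> \<and>
    U_iso_realizable G a b {\<one>, x, inv x, y}"
proof -
  obtain d where d: "d \<notin> {p, q, r}" and supp_a: "supp a = {p, q, r, d}"
    using card_eq_4_obtain_fourth[OF card pqr ne] .
  have c: "p \<in> carrier G" "q \<in> carrier G" "r \<in> carrier G" "d \<in> carrier G"
    using a supp_a by (auto simp: grp_ring_def)
  define x where "x = inv q \<otimes> r"
  define y where "y = inv q \<otimes> d"
  have "inv q \<otimes> p = inv (inv p \<otimes> q)"
    using c by (simp add: inv_mult_group)
  then have "(\<lambda>h. inv q \<otimes> h) ` supp a = {\<one>, x, inv x, y}"
    using c eq by (auto simp: supp_a x_def y_def)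
  moreover have "x \<in> carrier G" "y \<in> carrier G"
    using c by (simp_all add: x_def y_def)
  moreover have "x \<noteq> y" "x \<noteq> \<one>" "y \<noteq> \<one>"
    using c ne d by (auto simp: x_def y_def inv_solve_left')
  ultimately show ?thesis
    using U_iso_realizable_translate[OF c(2) a b ab]
    by (intro bexI[of _ x] bexI[of _ y]) simp_all
qed

lemma U_iso_realizable_product:
  assumes a: "a \<in> grp_ring G" and b: "b \<in> grp_ring G" and ab: "gr_mult G a b = gr_one G"
    and card: "card (supp a) = 4" and mem: "h \<in> supp a" "h' \<in> supp a" "k \<in> supp a" "k' \<in> supp a"
    and ne: "h \<noteq> h'" "h' \<noteq> k" "h \<noteq> k" "k \<noteq> k'" "h \<noteq> k'" "h' \<noteq> k'"
    and eq: "inv h \<otimes> h' = inv k \<otimes> k'"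
  shows "\<exists>x\<in>carrier G. \<exists>y\<in>carrier G. x \<noteq> y \<and> x \<noteq> \<one> \<and> y \<noteq> \<one> \<and>
    U_iso_realizable G a b {\<one>, x, y, x \<otimes> y}"
proof -
  obtain d where "d \<notin> {h, h', k}" and "supp a = {h, h', k, d}"
    using card_eq_4_obtain_fourth[OF card mem(1-3) ne(1-3)] .
  then have supp_a: "supp a = {h, h', k, k'}"
    using mem(4) ne by auto
  have c: "h \<in> carrier G" "h' \<in> carrier G" "k \<in> carrier G" "k' \<in> carrier G"
    using a supp_a by (auto simp: grp_ring_def)
  define x where "x = inv h \<otimes> k"
  define y where "y = inv h \<otimes> h'"
  have "x \<otimes> y = inv h \<otimes> (k \<otimes> (inv k \<otimes> k'))"
    using c eq by (simp add: x_def y_def m_assoc)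
  then have "(\<lambda>g. inv h \<otimes> g) ` supp a = {\<one>, x, y, x \<otimes> y}"
    using c by (auto simp: supp_a x_def y_def)
  moreover have "x \<in> carrier G" "y \<in> carrier G"
    using c by (simp_all add: x_def y_def)
  moreover have "x \<noteq> y" "x \<noteq> \<one>" "y \<noteq> \<one>"
    using c ne by (auto simp: x_def y_def inv_solve_left')
  ultimately show ?thesis
    using U_iso_realizable_translate[OF c(1) a b ab]
    by (intro bexI[of _ x] bexI[of _ y]) simp_all
qed

lemma U_iso_realizable_normal_form:
  assumes tf: "torsion_free G" and a: "a \<in> grp_ring G" and b: "b \<in> grp_ring G"
    and ab: "gr_mult G a b = gr_one G"
    and card: "card (supp a) = 4" and few: "card (S_set G a) < 12"
  shows "(\<exists>x\<in>carrier G. \<exists>y\<in>carrier G. x \<noteq> y \<and> x \<noteq> \<one> \<and> y \<noteq> \<one> \<and>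
            U_iso_realizable G a b {\<one>, x, inv x, y})
       \<or> (\<exists>x\<in>carrier G. \<exists>y\<in>carrier G. x \<noteq> y \<and> x \<noteq> \<one> \<and> y \<noteq> \<one> \<and>
            U_iso_realizable G a b {\<one>, x, y, x \<otimes> y})"
proof -
  have supp_a: "finite (supp a)" "supp a \<subseteq> carrier G"
    using a by (simp_all add: grp_ring_def)
  moreover have "card (S_set G a) < card (supp a) * (card (supp a) - 1)"
    using card few by simp
  ultimately obtain h h' k k' where mem: "h \<in> supp a" "h' \<in> supp a" "k \<in> supp a" "k' \<in> supp a"
    and ne: "h \<noteq> h'" "k \<noteq> k'" "h \<noteq> k" and eq: "inv h \<otimes> h' = inv k \<otimes> k'"
    by (rule S_set_collision)
  have c: "h \<in> carrier G" "h' \<in> carrier G" "k \<in> carrier G" "k' \<in> carrier G"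
    using mem supp_a by auto
  have "h' \<noteq> k'"
    using eq ne c by (metis inv_inv right_cancel inv_closed)
  moreover have "\<not> (h' = k \<and> h = k')"
    using torsion_free_inv_mult_eq_swap[OF tf] eq ne c by blast
  ultimately consider "h' = k" "h \<noteq> k'" | "h = k'" "h' \<noteq> k" | "h' \<noteq> k" "h \<noteq> k'"
    by blast
  then show ?thesis
  proof cases
    case 1
    then show ?thesis
      using U_iso_realizable_inverse_pair[OF a b ab card mem(1,3,4)] ne eq by simp
  next
    case 2
    then show ?thesis
      using U_iso_realizable_inverse_pair[OF a b ab card mem(3,1,2)] ne eq by simp
  next
    case 3
    then show ?thesis
      using U_iso_realizable_product[OF a b ab card mem] ne eq \<open>h' \<noteq> k'\<close> by simp
  qed
qed

end

theorem mainTheorem14: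
  fixes G :: "'g monoid" and a b :: "'g \<Rightarrow> 'k::field"
  assumes "group G"
    and "torsion_free G"
    and "gr_unit G a"
    and "card (supp a) = 4"
    and "card (S_set G a) = 10"
    and "is_mate G a b"
  shows "(\<exists>x\<in>carrier G. \<exists>y\<in>carrier G. x \<noteq> y \<and> x \<noteq> \<one>\<^bsub>G\<^esub> \<and> y \<noteq> \<one>\<^bsub>G\<^esub> \<and>
            (\<exists>a' b'. a' \<in> grp_ring G \<and> b' \<in> grp_ring G \<and>
               supp a' = {\<one>\<^bsub>G\<^esub>, x, inv\<^bsub>G\<^esub> x, y} \<and> gr_mult G a' b' = gr_one G \<and>
               U_iso G a b a' b'))
       \<or> (\<exists>x\<in>carrier G. \<exists>y\<in>carrier G. x \<noteq> y \<and> x \<noteq> \<one>\<^bsub>G\<^esub> \<and> y \<noteq> \<one>\<^bsub>G\<^esub> \<and>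
            (\<exists>a' b'. a' \<in> grp_ring G \<and> b' \<in> grp_ring G \<and>
               supp a' = {\<one>\<^bsub>G\<^esub>, x, y, x \<otimes>\<^bsub>G\<^esub> y} \<and> gr_mult G a' b' = gr_one G \<and>
               U_iso G a b a' b'))"
proof -
  interpret group G by fact
  have "a \<in> grp_ring G" and "b \<in> grp_ring G" and "gr_mult G a b = gr_one G"
    using assms(3,6) by (simp_all add: gr_unit_def is_mate_def)
  from U_iso_realizable_normal_form[OF assms(2) this assms(4)] show ?thesis
    unfolding U_iso_realizable_def using assms(5) by simp
qed

end
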